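(* Let $I,J$ be positive integers and $\alpha_1,\alpha_2,\gamma_0,c_0>0$. For a truncation level $T\ge1$, consider the truncated DEPM: independently for $k=1,\dots,T$, $(\phi_{1,k},\dots,\phi_{I,k})\sim\mathrm{Dirichlet}(\alpha_1,\dots,\alpha_1)$, $(\psi_{1,k},\dots,\psi_{J,k})\sim\mathrm{Dirichlet}(\alpha_2,\dots,\alpha_2)$, $\lambda_k\sim\mathrm{Gamma}(\gamma_0/T,c_0)$ (shape, rate); given these, independently for each $(i,j)\in\{1,\dots,I\}\times\{1,\dots,J\}$, $m_{i,j,\cdot}\sim\mathrm{Poisson}\big(\sum_{k=1}^T\phi_{i,k}\psi_{j,k}\lambda_k\big)$, and given $m_{i,j,\cdot}$, the assignments $z_{i,j,1},\dots,z_{i,j,m_{i,j,\cdot}}\in\{1,\dots,T\}$ are i.i.d. with $P(z_{i,j,s}=k)\propto\phi_{i,k}\psi_{j,k}\lambda_k$. Let $P_T(\bm m,\bm z)$ denote the marginal probability of $\bm m=(m_{i,j,\cdot})$ and $\bm z=(z_{i,j,s})$ obtained by integrating out $\phi,\psi,\lambda$. Set $m_{i,j,k}=\#\{s:z_{i,j,s}=k\}$, $m_{i,\cdot,k}=\sum_jm_{i,j,k}$, $m_{\cdot,j,k}=\sum_im_{i,j,k}$, $m_{\cdot,\cdot,k}=\sum_i\sum_jm_{i,j,k}$, let $K_+$ be the number of labels $k$ with $m_{\cdot,\cdot,k}>0$, and let $[\bm z]$ denote the partition of the $M=\sum_{i,j}m_{i,j,\cdot}$ customers induced by $\bm z$ (so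 that $P_T(\bm m,[\bm z])=\frac{T!}{(T-K_+)!}P_T(\bm m,\bm z)$). Fix $\bm m$ and $\bm z$ (with labels in a fixed finite set, so $P_T$ is defined for all sufficiently large $T$), and index the $K_+$ occupied labels by $k=1,\dots,K_+$. Then $$\lim_{T\to\infty}\frac{T!}{(T-K_+)!}P_T(\bm m,\bm z)=\prod_{i=1}^I\prod_{j=1}^J\frac{1}{m_{i,j,\cdot}!}\times\prod_{k=1}^{K_+}\frac{\Gamma(I\alpha_1)}{\Gamma(I\alpha_1+m_{\cdot,\cdot,k})}\prod_{i=1}^I\frac{\Gamma(\alpha_1+m_{i,\cdot,k})}{\Gamma(\alpha_1)}\times\prod_{k=1}^{K_+}\frac{\Gamma(J\alpha_2)}{\Gamma(J\alpha_2+m_{\cdot,\cdot,k})}\prod_{j=1}^J\frac{\Gamma(\alpha_2+m_{\cdot,j,k})}{\Gamma(\alpha_2)}\times\gamma_0^{K_+}\Big(\frac{c_0}{c_0+1}\Big)^{\gamma_0}\prod_{k=1}^{K_+}\frac{\Gamma(m_{\cdot,\cdot,k})}{(c_0+1)^{m_{\cdot,\cdot,k}}},$$ where $\Gamma(\cdot)$ is the gamma function.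
   Context: $\mathrm{Gamma}(a,b)$ denotes the gamma distribution with shape $a$ and rate $b$. The limit is the marginal likelihood of the "truly infinite" DEPM (IDEPM). *)

theory Defs
  imports "HOL-Probability.Probability"
begin

text \<open>Indices are 0-based: i < I, j < J, labels k < T.
  A Dirichlet(a,...,a) vector on n coordinates is parametrised by its first n-1
  coordinates (Lebesgue density on the open simplex); the last one is 1 minus their sum.\<close>

definition dir_vec :: "nat \<Rightarrow> (nat \<Rightarrow> real) \<Rightarrow> nat \<Rightarrow> real" where
  "dir_vec n x i = (if i < n - 1 then x i else 1 - (\<Sum>l<n - 1. x l))"

definition dirichlet_density :: "nat \<Rightarrow> real \<Rightarrow> (nat \<Rightarrow> real) \<Rightarrow> real" where
  "dirichlet_density n a x =
     (if (\<forall>i<n - 1. 0 < x i) \<and> (\<Sum>l<n - 1. x l) < 1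
      then Gamma (real n * a) / Gamma a ^ n * (\<Prod>i<n. dir_vec n x i powr (a - 1))
      else 0)"

definition gamma_density :: "real \<Rightarrow> real \<Rightarrow> real \<Rightarrow> real" where
  "gamma_density a b x = (if 0 < x then b powr a / Gamma a * x powr (a - 1) * exp (- b * x) else 0)"

definition poisson_prob :: "real \<Rightarrow> nat \<Rightarrow> real" where
  "poisson_prob r n = exp (- r) * r ^ n / fact n"

definition depm_lik ::
  "nat \<Rightarrow> nat \<Rightarrow> nat \<Rightarrow> (nat \<Rightarrow> nat \<Rightarrow> nat) \<Rightarrow> (nat \<Rightarrow> nat \<Rightarrow> nat \<Rightarrow> nat)
   \<Rightarrow> (nat \<Rightarrow> nat \<Rightarrow> real) \<Rightarrow> (nat \<Rightarrow> nat \<Rightarrow> real) \<Rightarrow> (nat \<Rightarrow> real) \<Rightarrow> real" where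
  "depm_lik I J T m z phi psi lam =
     (let w = (\<lambda>i j k. dir_vec I (phi k) i * dir_vec J (psi k) j * lam k);
          r = (\<lambda>i j. \<Sum>k<T. w i j k)
      in \<Prod>i<I. \<Prod>j<J. poisson_prob (r i j) (m i j) * (\<Prod>s<m i j. w i j (z i j s) / r i j))"

definition depm_marginal ::
  "nat \<Rightarrow> nat \<Rightarrow> real \<Rightarrow> real \<Rightarrow> real \<Rightarrow> real \<Rightarrow> nat \<Rightarrow> (nat \<Rightarrow> nat \<Rightarrow> nat)
   \<Rightarrow> (nat \<Rightarrow> nat \<Rightarrow> nat \<Rightarrow> nat) \<Rightarrow> ennreal" where
  "depm_marginal I J a1 a2 g0 c0 T m z =
     (if \<forall>i<I. \<forall>j<J. \<forall>s<m i j. z i j s < T then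
       \<integral>\<^sup>+ phi. \<integral>\<^sup>+ psi. \<integral>\<^sup>+ lam.
          ennreal ((\<Prod>k<T. dirichlet_density I a1 (phi k)) *
                   (\<Prod>k<T. dirichlet_density J a2 (psi k)) *
                   (\<Prod>k<T. gamma_density (g0 / real T) c0 (lam k)) *
                   depm_lik I J T m z phi psi lam)
        \<partial>(PiM {..<T} (\<lambda>_. lborel))
        \<partial>(PiM {..<T} (\<lambda>_. PiM {..<J - 1} (\<lambda>_. lborel)))
        \<partial>(PiM {..<T} (\<lambda>_. PiM {..<I - 1} (\<lambda>_. lborel)))
      else 0)"

definition cnt :: "(nat \<Rightarrow> nat \<Rightarrow> nat) \<Rightarrow> (nat \<Rightarrow> nat \<Rightarrow> nat \<Rightarrow> nat) \<Rightarrow> nat \<Rightarrow> nat \<Rightarrow> nat \<Rightarrow> nat" where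
  "cnt m z i j k = card {s. s < m i j \<and> z i j s = k}"

definition occupied :: "nat \<Rightarrow> nat \<Rightarrow> (nat \<Rightarrow> nat \<Rightarrow> nat) \<Rightarrow> (nat \<Rightarrow> nat \<Rightarrow> nat \<Rightarrow> nat) \<Rightarrow> nat set" where
  "occupied I J m z = {k. \<exists>i<I. \<exists>j<J. \<exists>s<m i j. z i j s = k}"

end

theory Submission
  imports Defs
begin

text \<open>Integrating out \<phi>, \<psi>, \<lambda> factorises over the labels k. Every column of \<phi> and \<psi> sums
  to one, so the Poisson rates add up to the sum of the \<lambda> k, and the likelihood becomes the
  product of the 1/m(i,j)! times, for each label, the monomial
  exp(-\<lambda> k) \<Prod>i \<phi>(i,k)^m(i,.,k) \<Prod>j \<psi>(j,k)^m(.,j,k) \<lambda>(k)^m(.,.,k).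
  Dirichlet moments turn the \<phi>- and \<psi>-factors into the Gamma ratios of the limit, and the
  Gamma(\<gamma>0/T, c0) moment against exp(-\<lambda>) gives
  (c0/(c0+1))^(\<gamma>0/T) \<Gamma>(\<gamma>0/T + m) / \<Gamma>(\<gamma>0/T) / (c0+1)^m.
  Unoccupied labels contribute 1. For an occupied label \<Gamma>(\<gamma>0/T + m) / \<Gamma>(\<gamma>0/T) is
  asymptotic to (\<gamma>0/T) \<Gamma>(m), and the factor T^K+ lost this way is restored by T!/(T-K+)!.\<close>

section \<open>Beta, Dirichlet and Gamma integrals\<close>

lemma Beta_real_pos: "0 < p \<Longrightarrow> 0 < q \<Longrightarrow> 0 < Beta p (q::real)"
  unfolding Beta_def by simp

lemma nn_integral_Beta_interval:
  fixes p q u :: real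
  assumes p: "0 < p" and q: "0 < q" and u: "0 < u"
  shows "(\<integral>\<^sup>+y. ennreal (indicator {0<..<u} y * (y powr (p-1) * (u-y) powr (q-1))) \<partial>lborel)
          = ennreal (Beta p q * u powr (p+q-1))"
proof -
  have B: "(\<integral>\<^sup>+t. ennreal (indicator {0..1} t * (t powr (p-1) * (1-t) powr (q-1))) \<partial>lborel) = ennreal (Beta p q)"
    by (rule nn_integral_has_integral_lebesgue[OF _ has_integral_Beta_real[OF p q]]) auto
  have scale: "ennreal (indicator {0<..<u} (u*x) * ((u*x) powr (p-1) * (u - u*x) powr (q-1)))
      = ennreal (u powr (p+q-2)) * ennreal (indicator {0..1} x * (x powr (p-1) * (1-x) powr (q-1)))" for x
  proof (cases "0 < x \<and> x < 1")
    case True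
    have "u - u*x = u * (1-x)" by (simp add: algebra_simps)
    then have "(u*x) powr (p-1) * (u - u*x) powr (q-1) = u powr (p+q-2) * (x powr (p-1) * (1-x) powr (q-1))"
      using True u by (simp add: powr_mult powr_add[symmetric] mult_ac diff_add_eq)
    then show ?thesis using True u
      by (simp add: indicator_def ennreal_mult[symmetric])
  next
    case False
    then have "x \<le> 0 \<or> 1 \<le> x" by auto
    then show ?thesis using u
      by (auto simp: indicator_def zero_less_mult_iff)
  qed
  have "(\<integral>\<^sup>+y. ennreal (indicator {0<..<u} y * (y powr (p-1) * (u-y) powr (q-1))) \<partial>lborel)
      = \<bar>u\<bar> * (\<integral>\<^sup>+x. ennreal (indicator {0<..<u} (0 + u*x) * ((0 + u*x) powr (p-1) * (u-(0 + u*x)) powr (q-1))) \<partial>lborel)"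
    by (rule nn_integral_real_affine) (use u in auto)
  also have "\<dots> = u * (\<integral>\<^sup>+x. ennreal (u powr (p+q-2)) * ennreal (indicator {0..1} x * (x powr (p-1) * (1-x) powr (q-1))) \<partial>lborel)"
    using u by (simp add: scale)
  also have "\<dots> = u * (ennreal (u powr (p+q-2)) * ennreal (Beta p q))"
    by (simp add: nn_integral_cmult B)
  also have "\<dots> = ennreal (Beta p q * u powr (p+q-1))"
  proof -
    have "u * u powr (p+q-2) = u powr (p+q-1)" using u
      by (simp add: powr_add[symmetric] powr_mult_base)
    then show ?thesis using u Beta_real_pos[OF p q]
      by (simp add: ennreal_mult[symmetric] mult_ac)
  qed
  finally show ?thesis .
qed

definition open_simplex :: "nat \<Rightarrow> real \<Rightarrow> (nat \<Rightarrow> real) set" where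
  "open_simplex n s = {x. (\<forall>i<n. 0 < x i) \<and> (\<Sum>i<n. x i) < s}"

text \<open>Unnormalised Dirichlet(b 0, ..., b (n-1), c) density on the simplex of size s; the last
  coordinate s - \<Sum>i<n. x i is implicit.\<close>
definition dirichlet_kernel :: "nat \<Rightarrow> real \<Rightarrow> (nat \<Rightarrow> real) \<Rightarrow> real \<Rightarrow> (nat \<Rightarrow> real) \<Rightarrow> real" where
  "dirichlet_kernel n s b c x =
     indicator (open_simplex n s) x * ((\<Prod>i<n. x i powr (b i - 1)) * (s - (\<Sum>i<n. x i)) powr (c - 1))"

lemma indicator_open_simplex_measurable [measurable]:
  "(\<lambda>x. indicator (open_simplex n s) x :: real) \<in> borel_measurable (PiM {..<n} (\<lambda>_. lborel))"
proof -
  have "(\<lambda>x. indicator {x\<in>space (PiM {..<n} (\<lambda>_. lborel)). (\<forall>i\<in>{..<n}. 0 < x i) \<and> (\<Sum>i<n. x i) < s} x :: real)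
      \<in> borel_measurable (PiM {..<n} (\<lambda>_. lborel))"
    by measurable
  then show ?thesis
    by (rule measurable_cong[THEN iffD1, rotated]) (auto simp: open_simplex_def indicator_def)
qed

lemma dirichlet_kernel_measurable [measurable]:
  "dirichlet_kernel n s b c \<in> borel_measurable (PiM {..<n} (\<lambda>_. lborel))"
  unfolding dirichlet_kernel_def by measurable

lemma nn_integral_dirichlet_kernel_last_coordinate:
  assumes "0 < b n" "0 < c"
  shows "(\<integral>\<^sup>+y. ennreal (dirichlet_kernel (Suc n) s b c (x(n:=y))) \<partial>lborel)
       = ennreal (Beta (b n) c) * ennreal (dirichlet_kernel n s b (b n + c) x)"
proof (cases "x \<in> open_simplex n s")
  case False
  then have "x(n:=y) \<notin> open_simplex (Suc n) s" for y
    by (auto simp: open_simplex_def)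
  with False show ?thesis by (simp add: dirichlet_kernel_def)
next
  case True
  define u where "u = s - (\<Sum>i<n. x i)"
  have u: "0 < u" using True by (simp add: open_simplex_def u_def)
  define P where "P = (\<Prod>i<n. x i powr (b i - 1))"
  have P: "0 \<le> P" unfolding P_def by (intro prod_nonneg) auto
  have "dirichlet_kernel (Suc n) s b c (x(n:=y))
      = P * (indicator {0<..<u} y * (y powr (b n - 1) * (u - y) powr (c - 1)))" for y
    using True by (auto simp: dirichlet_kernel_def open_simplex_def indicator_def u_def P_def less_Suc_eq diff_diff_eq)
  then have "(\<integral>\<^sup>+y. ennreal (dirichlet_kernel (Suc n) s b c (x(n:=y))) \<partial>lborel)
      = (\<integral>\<^sup>+y. ennreal P * ennreal (indicator {0<..<u} y * (y powr (b n - 1) * (u - y) powr (c - 1))) \<partial>lborel)"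
    by (intro nn_integral_cong) (simp only: ennreal_mult'[OF P])
  also have "\<dots> = ennreal P * ennreal (Beta (b n) c * u powr (b n + c - 1))"
    by (subst nn_integral_cmult) (simp_all add: nn_integral_Beta_interval[OF assms u])
  also have "\<dots> = ennreal (Beta (b n) c) * ennreal (dirichlet_kernel n s b (b n + c) x)"
    using True P Beta_real_pos[OF assms]
    by (simp add: dirichlet_kernel_def u_def P_def ennreal_mult'[symmetric] mult_ac)
  finally show ?thesis .
qed

lemma nn_integral_dirichlet_kernel:
  assumes "\<forall>i<n. 0 < b i" "0 < c" "0 < s"
  shows "(\<integral>\<^sup>+x. ennreal (dirichlet_kernel n s b c x) \<partial>PiM {..<n} (\<lambda>_. lborel))
     = ennreal ((\<Prod>i<n. Gamma (b i)) * Gamma c / Gamma ((\<Sum>i<n. b i) + c) * s powr ((\<Sum>i<n. b i) + c - 1))"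
  using assms
proof (induction n arbitrary: c)
  case 0
  then have "Gamma c \<noteq> 0" by (metis Gamma_real_pos order_less_irrefl)
  with 0 show ?case
    by (simp add: PiM_empty nn_integral_count_space_finite dirichlet_kernel_def open_simplex_def)
next
  case (Suc n)
  interpret product_sigma_finite "\<lambda>_::nat. lborel::real measure"
    by (simp add: product_sigma_finite_def lborel.sigma_finite_measure_axioms)
  have bn: "0 < b n" and bnc: "0 < b n + c" using Suc.prems by auto
  have "(\<integral>\<^sup>+x. ennreal (dirichlet_kernel (Suc n) s b c x) \<partial>PiM {..<Suc n} (\<lambda>_. lborel))
      = (\<integral>\<^sup>+x. ennreal (Beta (b n) c) * ennreal (dirichlet_kernel n s b (b n + c) x) \<partial>PiM {..<n} (\<lambda>_. lborel))"
    unfolding lessThan_Suc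
    by (subst product_nn_integral_insert)
       (auto simp: lessThan_Suc[symmetric] nn_integral_dirichlet_kernel_last_coordinate[where b=b and n=n, OF bn Suc.prems(2)])
  also have "\<dots> = ennreal (Beta (b n) c) * ennreal ((\<Prod>i<n. Gamma (b i)) * Gamma (b n + c)
      / Gamma ((\<Sum>i<n. b i) + (b n + c)) * s powr ((\<Sum>i<n. b i) + (b n + c) - 1))"
    using Suc.prems bnc by (simp add: nn_integral_cmult Suc.IH)
  also have "\<dots> = ennreal ((\<Prod>i<Suc n. Gamma (b i)) * Gamma c / Gamma ((\<Sum>i<Suc n. b i) + c)
      * s powr ((\<Sum>i<Suc n. b i) + c - 1))"
    using Gamma_real_pos[OF bnc] Beta_real_pos[OF bn Suc.prems(2)]
    by (simp add: ennreal_mult'[symmetric] Beta_def prod.lessThan_Suc sum.lessThan_Suc add.assoc field_simps)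
  finally show ?case .
qed

lemma powr_diff_one_mult_power: "0 < (x::real) \<Longrightarrow> x powr (a - 1) * x ^ k = x powr (a + real k - 1)"
  by (simp add: powr_realpow[symmetric] powr_add[symmetric] algebra_simps)

lemma nn_integral_dirichlet_density_moment:
  fixes a :: real and c :: "nat \<Rightarrow> nat"
  assumes n: "0 < n" and a: "0 < a"
  shows "(\<integral>\<^sup>+x. ennreal (dirichlet_density n a x * (\<Prod>i<n. dir_vec n x i ^ c i)) \<partial>PiM {..<n-1} (\<lambda>_. lborel))
       = ennreal (Gamma (real n * a) / Gamma (real n * a + real (\<Sum>i<n. c i)) * (\<Prod>i<n. Gamma (a + real (c i)) / Gamma a))"
proof -
  obtain p where np: "n = Suc p" using n by (cases n) auto
  define b where "b i = a + real (c i)" for i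
  define K where "K = Gamma (real n * a) / Gamma a ^ n"
  have K: "0 \<le> K" unfolding K_def using a n by (intro divide_nonneg_nonneg) auto
  have b: "\<forall>i<p. 0 < b i" "0 < b p" using a by (auto simp: b_def add_pos_nonneg)
  have dir_vec_Suc: "dir_vec (Suc p) x i = (if i < p then x i else 1 - (\<Sum>l<p. x l))" for x i
    by (simp add: dir_vec_def)
  have kernel: "dirichlet_density n a x * (\<Prod>i<n. dir_vec n x i ^ c i) = K * dirichlet_kernel p 1 b (b p) x" for x
  proof (cases "x \<in> open_simplex p 1")
    case False
    then show ?thesis unfolding dirichlet_density_def dirichlet_kernel_def open_simplex_def np by auto
  next
    case True
    then have pos: "0 < dir_vec n x i" if "i < n" for i
      using that True unfolding np dir_vec_def by (auto simp: open_simplex_def)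
    have "(\<Prod>i<n. dir_vec n x i powr (a - 1)) * (\<Prod>i<n. dir_vec n x i ^ c i)
        = (\<Prod>i<n. dir_vec n x i powr (b i - 1))"
      by (simp add: prod.distrib[symmetric] b_def pos powr_diff_one_mult_power)
    also have "\<dots> = (\<Prod>i<p. x i powr (b i - 1)) * (1 - (\<Sum>i<p. x i)) powr (b p - 1)"
      by (simp add: np prod.lessThan_Suc dir_vec_Suc)
    finally show ?thesis using True
      by (simp add: dirichlet_density_def dirichlet_kernel_def open_simplex_def np K_def mult_ac)
  qed
  have "(\<integral>\<^sup>+x. ennreal (dirichlet_density n a x * (\<Prod>i<n. dir_vec n x i ^ c i)) \<partial>PiM {..<n-1} (\<lambda>_. lborel))
      = ennreal K * ennreal ((\<Prod>i<p. Gamma (b i)) * Gamma (b p) / Gamma ((\<Sum>i<p. b i) + b p))"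
    unfolding kernel using K
    by (simp add: np ennreal_mult' nn_integral_cmult nn_integral_dirichlet_kernel[OF b zero_less_one])
  also have "\<dots> = ennreal (Gamma (real n * a) / Gamma (real n * a + real (\<Sum>i<n. c i)) * (\<Prod>i<n. Gamma (a + real (c i)) / Gamma a))"
  proof -
    have "(\<Sum>i<p. b i) + b p = real n * a + real (\<Sum>i<n. c i)"
      by (simp add: np b_def sum.distrib sum.lessThan_Suc algebra_simps)
    moreover have "(\<Prod>i<p. Gamma (b i)) * Gamma (b p) = (\<Prod>i<n. Gamma (a + real (c i)))"
      by (simp add: np b_def prod.lessThan_Suc)
    ultimately show ?thesis using K
      by (simp add: K_def prod_dividef ennreal_mult'[symmetric] mult.commute del: of_nat_sum)
  qed
  finally show ?thesis .
qed

lemma nn_integral_Gamma_rate: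
  fixes s r :: real
  assumes s: "0 < s" and r: "0 < r"
  shows "(\<integral>\<^sup>+l. ennreal (indicator {0..} l * (l powr (s - 1) * exp (- r * l))) \<partial>lborel) = ennreal (Gamma s / r powr s)"
proof -
  have scale: "ennreal (indicator {0..} (r*l) * (r*l) powr (s - 1) / exp (r*l))
      = ennreal (r powr (s - 1)) * ennreal (indicator {0..} l * (l powr (s - 1) * exp (- r * l)))" for l
  proof (cases "0 \<le> l")
    case True
    then show ?thesis using r
      by (simp add: ennreal_mult'[symmetric] powr_mult exp_minus field_simps zero_le_mult_iff)
  next
    case False
    then show ?thesis using r by (simp add: indicator_def zero_le_mult_iff)
  qed
  have "ennreal (Gamma s) = (\<integral>\<^sup>+t. ennreal (indicator {0..} t * t powr (s - 1) / exp t) \<partial>lborel)"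
    using Gamma_conv_nn_integral_real[OF s] by simp
  also have "\<dots> = \<bar>r\<bar> * (\<integral>\<^sup>+l. ennreal (indicator {0..} (0 + r*l) * (0 + r*l) powr (s - 1) / exp (0 + r*l)) \<partial>lborel)"
    by (rule nn_integral_real_affine) (use r in auto)
  also have "\<dots> = r * (\<integral>\<^sup>+l. ennreal (r powr (s - 1)) * ennreal (indicator {0..} l * (l powr (s - 1) * exp (- r * l))) \<partial>lborel)"
    using r by (simp add: scale)
  also have "\<dots> = r * ennreal (r powr (s - 1)) * (\<integral>\<^sup>+l. ennreal (indicator {0..} l * (l powr (s - 1) * exp (- r * l))) \<partial>lborel)"
    by (subst nn_integral_cmult) (simp_all add: mult.assoc)
  finally have eq: "ennreal (Gamma s) = ennreal (r powr s) * (\<integral>\<^sup>+l. ennreal (indicator {0..} l * (l powr (s - 1) * exp (- r * l))) \<partial>lborel)"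
    using r by (simp add: ennreal_mult'[symmetric] powr_mult_base)
  have "ennreal (Gamma s / r powr s) = ennreal (Gamma s) / ennreal (r powr s)"
    using r s by (simp add: divide_ennreal)
  also have "\<dots> = (\<integral>\<^sup>+l. ennreal (indicator {0..} l * (l powr (s - 1) * exp (- r * l))) \<partial>lborel)"
    unfolding eq using r by (subst mult.commute, subst ennreal_mult_divide_eq) auto
  finally show ?thesis by simp
qed

text \<open>The factor \<open>exp (- l)\<close> is what is left of the Poisson probabilities after factorisation.\<close>
lemma nn_integral_gamma_density_exp_moment:
  fixes sh r :: real and M :: nat
  assumes sh: "0 < sh" and r: "0 < r"
  shows "(\<integral>\<^sup>+l. ennreal (gamma_density sh r l * exp (- l) * l ^ M) \<partial>lborel)
       = ennreal ((r / (r + 1)) powr sh * (Gamma (sh + real M) / Gamma sh / (r + 1) ^ M))"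
proof -
  define K where "K = r powr sh / Gamma sh"
  have K: "0 \<le> K" unfolding K_def using sh by auto
  have kernel: "gamma_density sh r l * exp (- l) * l ^ M
      = K * (indicator {0..} l * (l powr (sh + real M - 1) * exp (- (r + 1) * l)))" for l
  proof (cases "0 < l")
    case True
    have "exp (- l) * exp (- (r * l)) = exp (- (r + 1) * l)"
      by (simp add: exp_add[symmetric] algebra_simps)
    moreover have "l powr (sh - 1) * l ^ M = l powr (sh + real M - 1)"
      using True by (simp add: powr_realpow[symmetric] powr_add[symmetric] algebra_simps)
    moreover have "gamma_density sh r l * exp (- l) * l ^ M
        = K * ((l powr (sh - 1) * l ^ M) * (exp (- l) * exp (- (r * l))))"
      using True by (simp add: gamma_density_def K_def mult_ac)
    ultimately show ?thesis
      using True by simp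
  next
    case False
    then show ?thesis using sh by (cases "l = 0") (auto simp: gamma_density_def)
  qed
  have "(\<integral>\<^sup>+l. ennreal (gamma_density sh r l * exp (- l) * l ^ M) \<partial>lborel)
      = (\<integral>\<^sup>+l. ennreal K * ennreal (indicator {0..} l * (l powr (sh + real M - 1) * exp (- (r + 1) * l))) \<partial>lborel)"
    unfolding kernel by (simp only: ennreal_mult'[OF K])
  also have "\<dots> = ennreal K * ennreal (Gamma (sh + real M) / (r + 1) powr (sh + real M))"
    by (subst nn_integral_cmult, measurable, subst nn_integral_Gamma_rate)
       (use sh r in \<open>auto simp: add_pos_nonneg\<close>)
  also have "\<dots> = ennreal ((r / (r + 1)) powr sh * (Gamma (sh + real M) / Gamma sh / (r + 1) ^ M))"
    using r K by (simp add: ennreal_mult'[symmetric] K_def powr_add powr_divide powr_realpow field_simps)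
  finally show ?thesis .
qed

section \<open>Factorisation of the likelihood\<close>

lemma sum_dir_vec: "0 < n \<Longrightarrow> (\<Sum>i<n. dir_vec n x i) = 1"
  by (cases n) (simp_all add: sum.lessThan_Suc dir_vec_def)

lemma prod_comp_eq_prod_power_card:
  fixes f :: "nat \<Rightarrow> 'a::comm_monoid_mult" and z :: "nat \<Rightarrow> nat"
  assumes "\<forall>s<m. z s < T"
  shows "(\<Prod>s<m. f (z s)) = (\<Prod>k<T. f k ^ card {s. s < m \<and> z s = k})"
proof -
  have "(\<Prod>s<m. f (z s)) = (\<Prod>k<T. \<Prod>s\<in>{s. s \<in> {..<m} \<and> z s = k}. f (z s))"
    by (rule prod.group[of "{..<m}" "{..<T}" z "\<lambda>s. f (z s)", symmetric]) (use assms in auto)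
  also have "\<dots> = (\<Prod>k<T. \<Prod>s\<in>{s. s < m \<and> z s = k}. f k)"
    by (intro prod.cong) auto
  finally show ?thesis by simp
qed

lemma poisson_prob_mult_categorical:
  fixes w :: "nat \<Rightarrow> real" and z :: "nat \<Rightarrow> nat"
  assumes "r \<noteq> 0" "\<forall>s<m. z s < T"
  shows "poisson_prob r m * (\<Prod>s<m. w (z s) / r)
       = 1 / fact m * exp (- r) * (\<Prod>k<T. w k ^ card {s. s < m \<and> z s = k})"
proof -
  have "(\<Prod>s<m. w (z s) / r) = (\<Prod>s<m. w (z s)) / r ^ m"
    by (simp add: prod_dividef)
  with assms show ?thesis
    by (simp add: poisson_prob_def prod_comp_eq_prod_power_card[OF assms(2)])
qed

lemma sum_depm_rates:
  assumes "0 < I" "0 < J"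
  shows "(\<Sum>i<I. \<Sum>j<J. \<Sum>k<T. dir_vec I (phi k) i * dir_vec J (psi k) j * lam k) = (\<Sum>k<T. lam k)"
proof -
  have "(\<Sum>i<I. \<Sum>j<J. \<Sum>k<T. dir_vec I (phi k) i * dir_vec J (psi k) j * lam k)
      = (\<Sum>k<T. lam k * (\<Sum>i<I. dir_vec I (phi k) i) * (\<Sum>j<J. dir_vec J (psi k) j))"
    by (simp add: sum_distrib_left sum_distrib_right mult_ac sum.swap[of _ "{..<T}"])
  with assms show ?thesis by (simp add: sum_dir_vec)
qed

lemma depm_lik_factor:
  fixes phi psi :: "nat \<Rightarrow> nat \<Rightarrow> real" and lam :: "nat \<Rightarrow> real"
  assumes I: "0 < I" and J: "0 < J" and T: "0 < T"
    and zT: "\<forall>i<I. \<forall>j<J. \<forall>s<m i j. z i j s < T"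
    and phi: "\<forall>k<T. \<forall>i<I. 0 < dir_vec I (phi k) i"
    and psi: "\<forall>k<T. \<forall>j<J. 0 < dir_vec J (psi k) j"
    and lam: "\<forall>k<T. 0 < lam k"
  shows "depm_lik I J T m z phi psi lam =
     (\<Prod>i<I. \<Prod>j<J. 1 / fact (m i j)) *
     (\<Prod>k<T. exp (- lam k) * ((\<Prod>i<I. dir_vec I (phi k) i ^ (\<Sum>j<J. cnt m z i j k)) *
                          (\<Prod>j<J. dir_vec J (psi k) j ^ (\<Sum>i<I. cnt m z i j k)) *
                          lam k ^ (\<Sum>i<I. \<Sum>j<J. cnt m z i j k)))"
proof -
  define w where "w i j k = dir_vec I (phi k) i * dir_vec J (psi k) j * lam k" for i j k
  define r where "r i j = (\<Sum>k<T. w i j k)" for i j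
  have r: "r i j \<noteq> 0" if "i < I" "j < J" for i j
  proof -
    have "0 < r i j"
      unfolding r_def w_def using T that phi psi lam by (intro sum_pos) auto
    then show ?thesis by simp
  qed
  have lik: "depm_lik I J T m z phi psi lam
      = (\<Prod>i<I. \<Prod>j<J. 1 / fact (m i j) * exp (- r i j) * (\<Prod>k<T. w i j k ^ cnt m z i j k))"
    unfolding depm_lik_def Let_def w_def[symmetric] r_def[symmetric] cnt_def
    using r zT by (intro prod.cong refl poisson_prob_mult_categorical) auto
  have "(\<Sum>i<I. \<Sum>j<J. r i j) = (\<Sum>k<T. lam k)"
    unfolding r_def w_def by (rule sum_depm_rates[OF I J])
  then have exp: "(\<Prod>i<I. \<Prod>j<J. exp (- r i j)) = (\<Prod>k<T. exp (- lam k))"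
    by (simp only: exp_sum[symmetric] sum_negf finite_lessThan)
  have "(\<Prod>i<I. \<Prod>j<J. \<Prod>k<T. w i j k ^ cnt m z i j k)
      = (\<Prod>k<T. (\<Prod>i<I. \<Prod>j<J. dir_vec I (phi k) i ^ cnt m z i j k) *
          (\<Prod>i<I. \<Prod>j<J. dir_vec J (psi k) j ^ cnt m z i j k) *
          (\<Prod>i<I. \<Prod>j<J. lam k ^ cnt m z i j k))"
    unfolding w_def by (simp add: power_mult_distrib prod.distrib prod.swap[of _ "{..<T}"])
  also have "\<dots> = (\<Prod>k<T. (\<Prod>i<I. dir_vec I (phi k) i ^ (\<Sum>j<J. cnt m z i j k)) *
          (\<Prod>j<J. dir_vec J (psi k) j ^ (\<Sum>i<I. cnt m z i j k)) *
          lam k ^ (\<Sum>i<I. \<Sum>j<J. cnt m z i j k))"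
    by (simp add: power_sum prod.swap[of _ "{..<I}"])
  finally have monomials: "(\<Prod>i<I. \<Prod>j<J. \<Prod>k<T. w i j k ^ cnt m z i j k) = \<dots>" .
  show ?thesis
    unfolding lik prod.distrib exp monomials by (simp add: prod.distrib mult_ac)
qed

section \<open>The truncated marginal in closed form\<close>

lemma dir_vec_measurable [measurable]: "(\<lambda>x. dir_vec n x i) \<in> borel_measurable (PiM {..<n-1} (\<lambda>_. lborel))"
  unfolding dir_vec_def by (cases "i < n - 1") simp_all

lemma dirichlet_density_measurable [measurable]:
  "dirichlet_density n a \<in> borel_measurable (PiM {..<n-1} (\<lambda>_. lborel))"
proof -
  have eq: "dirichlet_density n a = (\<lambda>x. indicator (open_simplex (n-1) 1) x *
      (Gamma (real n * a) / Gamma a ^ n * (\<Prod>i<n. dir_vec n x i powr (a - 1))))"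
    by (simp add: fun_eq_iff dirichlet_density_def open_simplex_def indicator_def)
  show ?thesis unfolding eq by measurable
qed

lemma gamma_density_measurable [measurable]: "gamma_density a b \<in> borel_measurable borel"
  unfolding gamma_density_def by measurable

lemma dirichlet_density_nonneg: "0 < n \<Longrightarrow> 0 < a \<Longrightarrow> 0 \<le> dirichlet_density n a x"
  unfolding dirichlet_density_def
  by (auto intro!: divide_nonneg_nonneg prod_nonneg mult_nonneg_nonneg less_imp_le[OF Gamma_real_pos])

lemma dir_vec_pos_if_dirichlet_density_nonzero:
  "dirichlet_density n a x \<noteq> 0 \<Longrightarrow> i < n \<Longrightarrow> 0 < dir_vec n x i"
  unfolding dirichlet_density_def dir_vec_def by (auto split: if_splits)

lemma sigma_finite_PiM_lborel: "sigma_finite_measure (PiM {..<n::nat} (\<lambda>_. lborel :: real measure))"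
  by (rule product_sigma_finite.sigma_finite)
     (simp_all add: product_sigma_finite_def lborel.sigma_finite_measure_axioms)

lemma nn_integral_PiM_prod:
  fixes T :: nat and f :: "nat \<Rightarrow> 'a \<Rightarrow> real"
  assumes "sigma_finite_measure M"
    and "\<And>k. k < T \<Longrightarrow> f k \<in> borel_measurable M"
    and "\<And>k x. k < T \<Longrightarrow> 0 \<le> f k x"
    and "\<And>k. k < T \<Longrightarrow> (\<integral>\<^sup>+x. ennreal (f k x) \<partial>M) = ennreal (c k)"
    and "\<And>k. k < T \<Longrightarrow> 0 \<le> c k"
  shows "(\<integral>\<^sup>+x. ennreal (\<Prod>k<T. f k (x k)) \<partial>PiM {..<T} (\<lambda>_. M)) = ennreal (\<Prod>k<T. c k)"
proof -
  interpret product_sigma_finite "\<lambda>_::nat. M"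
    using assms(1) by (simp add: product_sigma_finite_def)
  have "(\<integral>\<^sup>+x. ennreal (\<Prod>k<T. f k (x k)) \<partial>PiM {..<T} (\<lambda>_. M))
      = (\<integral>\<^sup>+x. (\<Prod>k<T. ennreal (f k (x k))) \<partial>PiM {..<T} (\<lambda>_. M))"
    by (intro nn_integral_cong prod_ennreal[symmetric]) (simp add: assms(3))
  also have "\<dots> = (\<Prod>k<T. \<integral>\<^sup>+x. ennreal (f k x) \<partial>M)"
    by (rule product_nn_integral_prod) (simp_all add: measurable_compose[OF assms(2) measurable_ennreal])
  also have "\<dots> = (\<Prod>k<T. ennreal (c k))"
    by (simp add: assms(4))
  also have "\<dots> = ennreal (\<Prod>k<T. c k)"
    by (rule prod_ennreal) (simp add: assms(5))
  finally show ?thesis .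
qed

lemma nn_integral_product_of_three:
  fixes f :: "'a \<Rightarrow> ennreal" and g :: "'b \<Rightarrow> ennreal" and h :: "'c \<Rightarrow> ennreal"
  assumes [measurable]: "f \<in> borel_measurable L" "g \<in> borel_measurable M" "h \<in> borel_measurable N"
  shows "(\<integral>\<^sup>+x. \<integral>\<^sup>+y. \<integral>\<^sup>+w. f x * g y * h w \<partial>N \<partial>M \<partial>L)
       = integral\<^sup>N L f * integral\<^sup>N M g * integral\<^sup>N N h"
  by (simp add: nn_integral_cmult nn_integral_multc)

lemma dirichlet_density_mult_powers_nonneg:
  assumes "0 < n" "0 < a"
  shows "0 \<le> dirichlet_density n a x * (\<Prod>i<n. dir_vec n x i ^ c i)"
proof (cases "dirichlet_density n a x = 0")
  case False
  then show ?thesis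
    using dirichlet_density_nonneg[OF assms, of x] dir_vec_pos_if_dirichlet_density_nonzero[OF False]
    by (intro mult_nonneg_nonneg prod_nonneg zero_le_power less_imp_le) auto
qed simp

lemma nn_integral_PiM_dirichlet_density_moments:
  fixes c :: "nat \<Rightarrow> nat \<Rightarrow> nat"
  assumes "0 < n" "0 < a"
  shows "(\<integral>\<^sup>+x. ennreal (\<Prod>k<T. dirichlet_density n a (x k) * (\<Prod>i<n. dir_vec n (x k) i ^ c k i))
            \<partial>PiM {..<T} (\<lambda>_. PiM {..<n-1} (\<lambda>_. lborel)))
       = ennreal (\<Prod>k<T. Gamma (real n * a) / Gamma (real n * a + real (\<Sum>i<n. c k i)) *
                          (\<Prod>i<n. Gamma (a + real (c k i)) / Gamma a))"
proof (intro nn_integral_PiM_prod[OF sigma_finite_PiM_lborel] nn_integral_dirichlet_density_moment[OF assms]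
    dirichlet_density_mult_powers_nonneg[OF assms])
  show "0 \<le> Gamma (real n * a) / Gamma (real n * a + real (\<Sum>i<n. c k i)) *
      (\<Prod>i<n. Gamma (a + real (c k i)) / Gamma a)" for k
    using assms by (intro mult_nonneg_nonneg divide_nonneg_nonneg prod_nonneg less_imp_le[OF Gamma_real_pos]
        add_pos_nonneg of_nat_0_le_iff) auto
qed measurable

lemma nn_integral_PiM_gamma_density_exp_moments:
  fixes M :: "nat \<Rightarrow> nat"
  assumes sh: "0 < sh" and r: "0 < r"
  shows "(\<integral>\<^sup>+l. ennreal (\<Prod>k<T. gamma_density sh r (l k) * exp (- l k) * l k ^ M k) \<partial>PiM {..<T} (\<lambda>_. lborel))
       = ennreal (\<Prod>k<T. (r / (r + 1)) powr sh * (Gamma (sh + real (M k)) / Gamma sh / (r + 1) ^ M k))"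
proof (intro nn_integral_PiM_prod[OF lborel.sigma_finite_measure_axioms] nn_integral_gamma_density_exp_moment[OF sh r])
  show "0 \<le> gamma_density sh r l * exp (- l) * l ^ M k" for k l
    using Gamma_real_pos[OF sh] r by (auto simp: gamma_density_def intro!: divide_nonneg_nonneg mult_nonneg_nonneg)
  show "0 \<le> (r / (r + 1)) powr sh * (Gamma (sh + real (M k)) / Gamma sh / (r + 1) ^ M k)" for k
    using sh r by (intro mult_nonneg_nonneg divide_nonneg_nonneg less_imp_le[OF Gamma_real_pos] add_pos_nonneg) auto
qed measurable

lemma depm_integrand_factor:
  fixes phi psi :: "nat \<Rightarrow> nat \<Rightarrow> real" and lam :: "nat \<Rightarrow> real"
  assumes I: "0 < I" and J: "0 < J" and T: "0 < T"
    and zT: "\<forall>i<I. \<forall>j<J. \<forall>s<m i j. z i j s < T"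
  shows "(\<Prod>k<T. dirichlet_density I a1 (phi k)) * (\<Prod>k<T. dirichlet_density J a2 (psi k)) *
         (\<Prod>k<T. gamma_density sh c (lam k)) * depm_lik I J T m z phi psi lam
       = (\<Prod>i<I. \<Prod>j<J. 1 / fact (m i j)) *
         (\<Prod>k<T. dirichlet_density I a1 (phi k) * (\<Prod>i<I. dir_vec I (phi k) i ^ (\<Sum>j<J. cnt m z i j k))) *
         (\<Prod>k<T. dirichlet_density J a2 (psi k) * (\<Prod>j<J. dir_vec J (psi k) j ^ (\<Sum>i<I. cnt m z i j k))) *
         (\<Prod>k<T. gamma_density sh c (lam k) * exp (- lam k) * lam k ^ (\<Sum>i<I. \<Sum>j<J. cnt m z i j k))"
    (is "?L = ?R")
proof (cases "\<forall>k<T. dirichlet_density I a1 (phi k) \<noteq> 0 \<and> dirichlet_density J a2 (psi k) \<noteq> 0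
                     \<and> gamma_density sh c (lam k) \<noteq> 0")
  case True
  then have "\<forall>k<T. \<forall>i<I. 0 < dir_vec I (phi k) i" "\<forall>k<T. \<forall>j<J. 0 < dir_vec J (psi k) j"
      "\<forall>k<T. 0 < lam k"
    by (auto simp: dir_vec_pos_if_dirichlet_density_nonzero gamma_density_def split: if_split_asm)
  note lik = depm_lik_factor[OF I J T zT this]
  show ?thesis
    unfolding lik by (simp add: prod.distrib mult_ac)
next
  case False
  then have "?L = 0" "?R = 0" by (auto simp: prod_zero_iff)
  then show ?thesis by metis
qed

lemma depm_marginal_closed_form:
  fixes I J T :: nat and a1 a2 g0 c0 :: real
  assumes I: "0 < I" and J: "0 < J" and a1: "0 < a1" and a2: "0 < a2" and g0: "0 < g0" and c0: "0 < c0"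
    and T: "0 < T" and zT: "\<forall>i<I. \<forall>j<J. \<forall>s<m i j. z i j s < T"
  shows "depm_marginal I J a1 a2 g0 c0 T m z = ennreal (
     (\<Prod>i<I. \<Prod>j<J. 1 / fact (m i j)) *
     (\<Prod>k<T. Gamma (real I * a1) / Gamma (real I * a1 + real (\<Sum>i<I. \<Sum>j<J. cnt m z i j k)) *
              (\<Prod>i<I. Gamma (a1 + real (\<Sum>j<J. cnt m z i j k)) / Gamma a1)) *
     (\<Prod>k<T. Gamma (real J * a2) / Gamma (real J * a2 + real (\<Sum>j<J. \<Sum>i<I. cnt m z i j k)) *
              (\<Prod>j<J. Gamma (a2 + real (\<Sum>i<I. cnt m z i j k)) / Gamma a2)) *
     (\<Prod>k<T. (c0 / (c0 + 1)) powr (g0 / real T) *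
              (Gamma (g0 / real T + real (\<Sum>i<I. \<Sum>j<J. cnt m z i j k)) / Gamma (g0 / real T)
               / (c0 + 1) ^ (\<Sum>i<I. \<Sum>j<J. cnt m z i j k))))"
proof -
  define sh where "sh = g0 / real T"
  have sh: "0 < sh" unfolding sh_def using g0 T by simp
  let ?C = "\<Prod>i<I. \<Prod>j<J. 1 / fact (m i j) :: real"
  let ?PA = "\<lambda>phi. \<Prod>k<T. dirichlet_density I a1 (phi k) * (\<Prod>i<I. dir_vec I (phi k) i ^ (\<Sum>j<J. cnt m z i j k))"
  let ?PB = "\<lambda>psi. \<Prod>k<T. dirichlet_density J a2 (psi k) * (\<Prod>j<J. dir_vec J (psi k) j ^ (\<Sum>i<I. cnt m z i j k))"
  let ?PG = "\<lambda>lam. \<Prod>k<T. gamma_density sh c0 (lam k) * exp (- lam k) * lam k ^ (\<Sum>i<I. \<Sum>j<J. cnt m z i j k)"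
  have "0 \<le> ?C" by (intro prod_nonneg) auto
  moreover have "0 \<le> ?PA phi" "0 \<le> ?PB psi" for phi psi
    using I J a1 a2 by (intro prod_nonneg dirichlet_density_mult_powers_nonneg; simp)+
  ultimately have "depm_marginal I J a1 a2 g0 c0 T m z =
     (\<integral>\<^sup>+phi. \<integral>\<^sup>+psi. \<integral>\<^sup>+lam. ennreal (?C * ?PA phi) * ennreal (?PB psi) * ennreal (?PG lam)
        \<partial>PiM {..<T} (\<lambda>_. lborel) \<partial>PiM {..<T} (\<lambda>_. PiM {..<J-1} (\<lambda>_. lborel)) \<partial>PiM {..<T} (\<lambda>_. PiM {..<I-1} (\<lambda>_. lborel)))"
    unfolding depm_marginal_def sh_def[symmetric] depm_integrand_factor[OF I J T zT]
    using zT by (simp add: ennreal_mult' mult_nonneg_nonneg)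
  also have "\<dots> = ennreal ?C * (\<integral>\<^sup>+phi. ennreal (?PA phi) \<partial>PiM {..<T} (\<lambda>_. PiM {..<I-1} (\<lambda>_. lborel)))
      * (\<integral>\<^sup>+psi. ennreal (?PB psi) \<partial>PiM {..<T} (\<lambda>_. PiM {..<J-1} (\<lambda>_. lborel)))
      * (\<integral>\<^sup>+lam. ennreal (?PG lam) \<partial>PiM {..<T} (\<lambda>_. lborel))"
  proof -
    have "(\<lambda>phi. ennreal (?PA phi)) \<in> borel_measurable (PiM {..<T} (\<lambda>_. PiM {..<I-1} (\<lambda>_. lborel)))"
      by measurable
    with \<open>0 \<le> ?C\<close> show ?thesis
      by (subst nn_integral_product_of_three; measurable?) (simp add: ennreal_mult' nn_integral_cmult)
  qed
  also have "\<dots> = ennreal (?C *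
     (\<Prod>k<T. Gamma (real I * a1) / Gamma (real I * a1 + real (\<Sum>i<I. \<Sum>j<J. cnt m z i j k)) *
              (\<Prod>i<I. Gamma (a1 + real (\<Sum>j<J. cnt m z i j k)) / Gamma a1)) *
     (\<Prod>k<T. Gamma (real J * a2) / Gamma (real J * a2 + real (\<Sum>j<J. \<Sum>i<I. cnt m z i j k)) *
              (\<Prod>j<J. Gamma (a2 + real (\<Sum>i<I. cnt m z i j k)) / Gamma a2)) *
     (\<Prod>k<T. (c0 / (c0 + 1)) powr sh *
              (Gamma (sh + real (\<Sum>i<I. \<Sum>j<J. cnt m z i j k)) / Gamma sh
               / (c0 + 1) ^ (\<Sum>i<I. \<Sum>j<J. cnt m z i j k))))"
    unfolding nn_integral_PiM_dirichlet_density_moments[OF I a1] nn_integral_PiM_dirichlet_density_moments[OF J a2]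
      nn_integral_PiM_gamma_density_exp_moments[OF sh c0]
    using \<open>0 \<le> ?C\<close> I J a1 a2
    by (simp add: ennreal_mult'[symmetric] less_imp_le[OF Gamma_real_pos] add_pos_nonneg mult_nonneg_nonneg
        divide_nonneg_nonneg prod_nonneg sum_nonneg del: of_nat_sum)
  finally show ?thesis unfolding sh_def .
qed

section \<open>The limit of infinitely many labels\<close>

lemma fact_div_fact_eq_prod:
  assumes "k \<le> n"
  shows "(fact n / fact (n - k) :: real) = (\<Prod>j<k. real (n - j))"
  using assms
proof (induction k)
  case (Suc k)
  then have "(fact (n - k) :: real) = real (n - k) * fact (n - Suc k)"
    by (metis Suc_diff_Suc Suc_le_lessD fact_Suc of_nat_fact of_nat_mult)
  then have "(fact n / fact (n - Suc k) :: real) = fact n / fact (n - k) * real (n - k)"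
    using Suc.prems by simp
  with Suc show ?case by (simp add: prod.lessThan_Suc)
qed simp

lemma fact_div_fact_over_power_tendsto:
  "((\<lambda>n. fact n / fact (n - k) / real n ^ k :: real) \<longlongrightarrow> 1) at_top"
proof -
  have "eventually (\<lambda>n. (\<Prod>j<k. 1 - real j / real n) = fact n / fact (n - k) / real n ^ k) at_top"
    using eventually_ge_at_top[of "Suc k"]
  proof eventually_elim
    case (elim n)
    then have "(\<Prod>j<k. 1 - real j / real n) = (\<Prod>j<k. real (n - j)) / real n ^ k"
      by (simp add: prod_dividef of_nat_diff field_simps)
    with elim show ?case by (simp add: fact_div_fact_eq_prod)
  qed
  moreover have "((\<lambda>n. \<Prod>j<k. 1 - real j / real n) \<longlongrightarrow> (\<Prod>j<k. 1 - 0)) at_top"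
    by (intro tendsto_prod tendsto_diff tendsto_const tendsto_divide_0[OF tendsto_const]
        filterlim_at_top_imp_at_infinity filterlim_real_sequentially)
  ultimately show ?thesis
    using tendsto_cong by fastforce
qed

lemma Gamma_small_shift_tendsto:
  fixes g x :: real
  assumes "0 < x"
  shows "((\<lambda>n::nat. Gamma (g / real n + x)) \<longlongrightarrow> Gamma x) at_top"
proof -
  have "isCont Gamma x"
    using assms by (intro isCont_Gamma) (auto elim: nonpos_Ints_cases)
  moreover have "((\<lambda>n::nat. g / real n + x) \<longlongrightarrow> 0 + x) at_top"
    by (intro tendsto_intros tendsto_divide_0[OF tendsto_const] filterlim_real_sequentially)
  ultimately show ?thesis
    using isCont_tendsto_compose by fastforce
qed

text \<open>Write \<Gamma>(g/n) = \<Gamma>(g/n + 1) / (g/n), where \<Gamma>(g/n + 1) tends to 1.\<close>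
lemma Gamma_small_shape_ratio_tendsto:
  fixes g :: real and M :: nat
  assumes g: "0 < g" and M: "0 < M"
  shows "((\<lambda>n::nat. real n * (Gamma (g / real n + real M) / Gamma (g / real n))) \<longlongrightarrow> g * Gamma (real M)) at_top"
proof -
  have "eventually (\<lambda>n. g * Gamma (g / real n + real M) / Gamma (g / real n + 1)
      = real n * (Gamma (g / real n + real M) / Gamma (g / real n))) at_top"
    using eventually_gt_at_top[of 0]
  proof eventually_elim
    case (elim n)
    define y where "y = g / real n"
    have y: "0 < y" and gy: "g = real n * y" using g elim by (simp_all add: y_def)
    have "Gamma (y + 1) = y * Gamma y"
      using y by (intro Gamma_plus1) (auto elim: nonpos_Ints_cases)
    with y gy have "g * Gamma (y + real M) / Gamma (y + 1) = real n * (Gamma (y + real M) / Gamma y)"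
      using Gamma_real_pos[OF y] by (simp add: field_simps)
    then show ?case by (simp only: y_def)
  qed
  moreover have "((\<lambda>n::nat. g * Gamma (g / real n + real M) / Gamma (g / real n + 1)) \<longlongrightarrow> g * Gamma (real M) / Gamma 1) at_top"
    using M by (intro tendsto_intros Gamma_small_shift_tendsto) auto
  ultimately show ?thesis
    using tendsto_cong by fastforce
qed

lemma fact_div_fact_mult_Gamma_ratios_tendsto:
  fixes g :: real and K :: "nat set" and M :: "nat \<Rightarrow> nat"
  assumes fin: "finite K" and g: "0 < g" and M: "\<forall>k\<in>K. 0 < M k"
  shows "((\<lambda>n. fact n / fact (n - card K) * (\<Prod>k\<in>K. Gamma (g / real n + real (M k)) / Gamma (g / real n)))
          \<longlongrightarrow> g ^ card K * (\<Prod>k\<in>K. Gamma (real (M k)))) at_top"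
proof -
  have distrib: "(\<Prod>k\<in>K. real n * (Gamma (g / real n + real (M k)) / Gamma (g / real n)))
      = real n ^ card K * (\<Prod>k\<in>K. Gamma (g / real n + real (M k)) / Gamma (g / real n))" for n
    by (simp only: prod.distrib prod_constant)
  have "eventually (\<lambda>n. fact n / fact (n - card K) / real n ^ card K *
        (\<Prod>k\<in>K. real n * (Gamma (g / real n + real (M k)) / Gamma (g / real n)))
      = fact n / fact (n - card K) * (\<Prod>k\<in>K. Gamma (g / real n + real (M k)) / Gamma (g / real n))) at_top"
    using eventually_gt_at_top[of 0] by eventually_elim (simp only: distrib, simp)
  moreover have "((\<lambda>n. fact n / fact (n - card K) / real n ^ card K *
        (\<Prod>k\<in>K. real n * (Gamma (g / real n + real (M k)) / Gamma (g / real n))))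
      \<longlongrightarrow> 1 * (\<Prod>k\<in>K. g * Gamma (real (M k)))) at_top"
    using M by (intro tendsto_mult tendsto_prod fact_div_fact_over_power_tendsto Gamma_small_shape_ratio_tendsto g) auto
  ultimately show ?thesis
    using tendsto_cong by (fastforce simp: prod.distrib)
qed

lemma finite_occupied: "finite (occupied I J m z)"
proof (rule finite_subset)
  show "occupied I J m z \<subseteq> (\<Union>i<I. \<Union>j<J. z i j ` {..<m i j})"
    unfolding occupied_def by auto
qed auto

lemma cnt_eq_0_if_not_occupied:
  "k \<notin> occupied I J m z \<Longrightarrow> i < I \<Longrightarrow> j < J \<Longrightarrow> cnt m z i j k = 0"
  unfolding cnt_def occupied_def by auto

lemma total_count_pos_if_occupied:
  assumes "k \<in> occupied I J m z"
  shows "0 < (\<Sum>i<I. \<Sum>j<J. cnt m z i j k)"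
proof -
  obtain i j s where ijs: "i < I" "j < J" "s < m i j" "z i j s = k"
    using assms unfolding occupied_def by auto
  then have "0 < cnt m z i j k"
    unfolding cnt_def by (subst card_gt_0_iff) auto
  with ijs show ?thesis
    by (metis (no_types, lifting) finite_lessThan gr_zeroI lessThan_iff sum_eq_0_iff)
qed

lemma depm_marginal_occupied:
  fixes I J T :: nat and a1 a2 g0 c0 :: real
  assumes pos: "0 < I" "0 < J" "0 < a1" "0 < a2" "0 < g0" "0 < c0"
    and T: "0 < T" and KT: "occupied I J m z \<subseteq> {..<T}"
  defines "Ks \<equiv> occupied I J m z"
    and "Mi \<equiv> (\<lambda>i k. \<Sum>j<J. cnt m z i j k)"
    and "Mj \<equiv> (\<lambda>j k. \<Sum>i<I. cnt m z i j k)"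
    and "Mk \<equiv> (\<lambda>k. \<Sum>i<I. \<Sum>j<J. cnt m z i j k)"
  shows "depm_marginal I J a1 a2 g0 c0 T m z = ennreal (
     (\<Prod>i<I. \<Prod>j<J. 1 / fact (m i j)) *
     (\<Prod>k\<in>Ks. Gamma (real I * a1) / Gamma (real I * a1 + real (Mk k)) *
                (\<Prod>i<I. Gamma (a1 + real (Mi i k)) / Gamma a1)) *
     (\<Prod>k\<in>Ks. Gamma (real J * a2) / Gamma (real J * a2 + real (Mk k)) *
                (\<Prod>j<J. Gamma (a2 + real (Mj j k)) / Gamma a2)) *
     ((c0 / (c0 + 1)) powr g0 * (\<Prod>k\<in>Ks. 1 / (c0 + 1) ^ Mk k)) *
     (\<Prod>k\<in>Ks. Gamma (g0 / real T + real (Mk k)) / Gamma (g0 / real T)))"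
proof -
  have zT: "\<forall>i<I. \<forall>j<J. \<forall>s<m i j. z i j s < T"
    using KT unfolding occupied_def by blast
  have unoccupied: "Mk k = 0" "\<forall>i<I. Mi i k = 0" "\<forall>j<J. Mj j k = 0" if "k \<notin> Ks" for k
    using cnt_eq_0_if_not_occupied[of k I J m z] that by (simp_all add: Ks_def Mk_def Mi_def Mj_def)
  have restrict: "(\<Prod>k<T. f k) = (\<Prod>k\<in>Ks. f k)" if "\<And>k. k \<notin> Ks \<Longrightarrow> f k = 1" for f :: "nat \<Rightarrow> real"
    by (rule prod.mono_neutral_right) (use KT that in \<open>auto simp: Ks_def\<close>)
  have Gamma_ne_0: "Gamma x \<noteq> 0" if "0 < x" for x :: real
    using Gamma_real_pos[OF that] by simp
  have "0 < real I * a1" "0 < real J * a2" "0 < g0 / real T" using pos T by simp_all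
  note Gamma_nonzero = this[THEN Gamma_ne_0] pos(3,4)[THEN Gamma_ne_0]
  have A_part: "(\<Prod>k<T. Gamma (real I * a1) / Gamma (real I * a1 + real (\<Sum>i<I. \<Sum>j<J. cnt m z i j k)) *
              (\<Prod>i<I. Gamma (a1 + real (\<Sum>j<J. cnt m z i j k)) / Gamma a1))
      = (\<Prod>k\<in>Ks. Gamma (real I * a1) / Gamma (real I * a1 + real (Mk k)) *
              (\<Prod>i<I. Gamma (a1 + real (Mi i k)) / Gamma a1))"
    using unoccupied unfolding Mk_def Mi_def by (intro restrict) (simp add: Gamma_nonzero)
  have swap: "(\<Sum>j<J. \<Sum>i<I. cnt m z i j k) = Mk k" for k
    unfolding Mk_def by (rule sum.swap)
  have B_part: "(\<Prod>k<T. Gamma (real J * a2) / Gamma (real J * a2 + real (\<Sum>j<J. \<Sum>i<I. cnt m z i j k)) *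
              (\<Prod>j<J. Gamma (a2 + real (\<Sum>i<I. cnt m z i j k)) / Gamma a2))
      = (\<Prod>k\<in>Ks. Gamma (real J * a2) / Gamma (real J * a2 + real (Mk k)) *
              (\<Prod>j<J. Gamma (a2 + real (Mj j k)) / Gamma a2))"
    using unoccupied unfolding swap Mj_def by (intro restrict) (simp add: Gamma_nonzero)
  define R where "R k = Gamma (g0 / real T + real (Mk k)) / Gamma (g0 / real T) / (c0 + 1) ^ Mk k" for k
  have "(\<Prod>k<T. (c0 / (c0 + 1)) powr (g0 / real T) * R k)
      = (\<Prod>k<T. (c0 / (c0 + 1)) powr (g0 / real T)) * (\<Prod>k<T. R k)"
    by (simp only: prod.distrib)
  also have "\<dots> = (c0 / (c0 + 1)) powr g0 * (\<Prod>k\<in>Ks. R k)"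
    using T pos by (simp add: powr_realpow[symmetric] powr_powr restrict R_def unoccupied Gamma_nonzero)
  also have "\<dots> = (c0 / (c0 + 1)) powr g0 * (\<Prod>k\<in>Ks. 1 / (c0 + 1) ^ Mk k) *
        (\<Prod>k\<in>Ks. Gamma (g0 / real T + real (Mk k)) / Gamma (g0 / real T))"
    by (simp add: R_def prod.distrib[symmetric] mult.assoc mult.commute)
  finally have G_part: "(\<Prod>k<T. (c0 / (c0 + 1)) powr (g0 / real T) *
        (Gamma (g0 / real T + real (\<Sum>i<I. \<Sum>j<J. cnt m z i j k)) / Gamma (g0 / real T)
         / (c0 + 1) ^ (\<Sum>i<I. \<Sum>j<J. cnt m z i j k))) = \<dots>"
    unfolding R_def Mk_def .
  show ?thesis
    unfolding depm_marginal_closed_form[OF pos T zT] A_part B_part G_part by (simp add: mult_ac)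
qed

theorem theorem4:
  fixes I J :: nat and a1 a2 g0 c0 :: real
    and m :: "nat \<Rightarrow> nat \<Rightarrow> nat" and z :: "nat \<Rightarrow> nat \<Rightarrow> nat \<Rightarrow> nat"
  assumes "0 < I" "0 < J" "0 < a1" "0 < a2" "0 < g0" "0 < c0"
  defines "Ks \<equiv> occupied I J m z"
    and "Kp \<equiv> card (occupied I J m z)"
    and "Mi \<equiv> (\<lambda>i k. \<Sum>j<J. cnt m z i j k)"
    and "Mj \<equiv> (\<lambda>j k. \<Sum>i<I. cnt m z i j k)"
    and "Mk \<equiv> (\<lambda>k. \<Sum>i<I. \<Sum>j<J. cnt m z i j k)"
  shows "((\<lambda>T. ennreal (fact T / fact (T - Kp)) * depm_marginal I J a1 a2 g0 c0 T m z)
          \<longlongrightarrow> ennreal (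
            (\<Prod>i<I. \<Prod>j<J. 1 / fact (m i j)) *
            (\<Prod>k\<in>Ks. Gamma (real I * a1) / Gamma (real I * a1 + real (Mk k)) *
                        (\<Prod>i<I. Gamma (a1 + real (Mi i k)) / Gamma a1)) *
            (\<Prod>k\<in>Ks. Gamma (real J * a2) / Gamma (real J * a2 + real (Mk k)) *
                        (\<Prod>j<J. Gamma (a2 + real (Mj j k)) / Gamma a2)) *
            (g0 ^ Kp * (c0 / (c0 + 1)) powr g0 *
             (\<Prod>k\<in>Ks. Gamma (real (Mk k)) / (c0 + 1) ^ Mk k)))) at_top"
proof -
  let ?Q = "(\<Prod>i<I. \<Prod>j<J. 1 / fact (m i j)) *
     (\<Prod>k\<in>Ks. Gamma (real I * a1) / Gamma (real I * a1 + real (Mk k)) *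
                (\<Prod>i<I. Gamma (a1 + real (Mi i k)) / Gamma a1)) *
     (\<Prod>k\<in>Ks. Gamma (real J * a2) / Gamma (real J * a2 + real (Mk k)) *
                (\<Prod>j<J. Gamma (a2 + real (Mj j k)) / Gamma a2)) *
     ((c0 / (c0 + 1)) powr g0 * (\<Prod>k\<in>Ks. 1 / (c0 + 1) ^ Mk k))"
  let ?ratios = "\<lambda>T. \<Prod>k\<in>Ks. Gamma (g0 / real T + real (Mk k)) / Gamma (g0 / real T)"
  have marginal: "depm_marginal I J a1 a2 g0 c0 T m z = ennreal (?Q * ?ratios T)"
    if "0 < T" "Ks \<subseteq> {..<T}" for T
    using depm_marginal_occupied[OF assms(1-6) that[unfolded Ks_def]]
    unfolding Ks_def Mi_def Mj_def Mk_def by simp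
  obtain N where N: "Ks \<subseteq> {..<N}"
    using finite_nat_bounded[OF finite_occupied] unfolding Ks_def by blast
  have "eventually (\<lambda>T. ennreal (fact T / fact (T - Kp)) * depm_marginal I J a1 a2 g0 c0 T m z
      = ennreal (?Q * (fact T / fact (T - Kp) * ?ratios T))) at_top"
    using eventually_ge_at_top[of "max N 1"]
  proof eventually_elim
    case (elim T)
    with N have "depm_marginal I J a1 a2 g0 c0 T m z = ennreal (?Q * ?ratios T)"
      by (intro marginal) auto
    then show ?case by (simp add: ennreal_mult'[symmetric] mult_ac)
  qed
  moreover have "((\<lambda>T. ennreal (?Q * (fact T / fact (T - Kp) * ?ratios T)))
      \<longlongrightarrow> ennreal (?Q * (g0 ^ Kp * (\<Prod>k\<in>Ks. Gamma (real (Mk k)))))) at_top"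
    unfolding Kp_def Ks_def[symmetric] using assms(5)
    by (intro tendsto_ennrealI tendsto_mult_left fact_div_fact_mult_Gamma_ratios_tendsto)
       (auto simp: Ks_def Mk_def finite_occupied total_count_pos_if_occupied)
  moreover have "(\<Prod>k\<in>Ks. Gamma (real (Mk k)) / (c0 + 1) ^ Mk k)
      = (\<Prod>k\<in>Ks. 1 / (c0 + 1) ^ Mk k) * (\<Prod>k\<in>Ks. Gamma (real (Mk k)))"
    by (simp add: prod.distrib[symmetric])
  ultimately show ?thesis
    using tendsto_cong by (fastforce simp: mult_ac)
qed

end
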